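(* If $f:K\to L$ is a $\times$-homotopy equivalence of simplicial complexes, then $\mathrm{Sing}(f):\mathrm{Sing}(K)\to\mathrm{Sing}(L)$ is a weak equivalence of simplicial sets (Kan–Quillen).
   Context: A simplicial complex $K$ consists of a set $V(K)$ and a collection of nonempty finite subsets (simplices) containing all singletons and closed under nonempty subsets; maps are vertex functions sending simplices to simplices; $\mathbf{Cpx}$ is the category. The product $K\times L$ has vertex set $V(K)\times V(L)$, a finite set being a simplex iff both of its projections are simplices. $I_n$ ($n\ge1$) is the complex on $\{0,\dots,n\}$ whose simplices are singletons and the edges $\{i,i+1\}$. Two maps $f,g:K\to L$ are $\times$-homotopic if for some $n\ge1$ there is a map $H:K\times I_n\to L$ with $H(-,0)=f$ and $H(-,n)=g$. A map $f:K\to L$ is a $\times$-homotopy equivalence if there is $g:L\to K$ with $gf$ $\times$-homotopic to $1_K$ and $fg$ $\times$-homotopic to $1_L$. $\mathbf{\Delta}^n$ is the complex on $\{0,\dots,n\}$ with all nonempty subsets simplices and $\mathrm{Sing}(K)_n=\mathbf{Cpx}(\mathbf{\Delta}^n,K)$ with simplicial operators by precomposition. *)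

theory Defs
  imports "HOL-Analysis.Analysis" "HOL-Homology.Simplices"
begin

type_synonym 'v cpx = "'v set \<times> 'v set set"

definition verts :: "'v cpx \<Rightarrow> 'v set" where "verts K = fst K"
definition simps :: "'v cpx \<Rightarrow> 'v set set" where "simps K = snd K"

definition is_cpx :: "'v cpx \<Rightarrow> bool" where
  "is_cpx K \<longleftrightarrow>
     (\<forall>s\<in>simps K. s \<noteq> {} \<and> finite s \<and> s \<subseteq> verts K) \<and>
     (\<forall>v\<in>verts K. {v} \<in> simps K) \<and>
     (\<forall>s\<in>simps K. \<forall>t. t \<noteq> {} \<and> t \<subseteq> s \<longrightarrow> t \<in> simps K)"

definition cpx_map :: "'v cpx \<Rightarrow> 'w cpx \<Rightarrow> ('v \<Rightarrow> 'w) \<Rightarrow> bool" where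
  "cpx_map K L f \<longleftrightarrow> (\<forall>v\<in>verts K. f v \<in> verts L) \<and> (\<forall>s\<in>simps K. f ` s \<in> simps L)"

definition cpx_prod :: "'v cpx \<Rightarrow> 'w cpx \<Rightarrow> ('v \<times> 'w) cpx" where
  "cpx_prod K L = (verts K \<times> verts L,
     {s. s \<noteq> {} \<and> finite s \<and> s \<subseteq> verts K \<times> verts L \<and>
         fst ` s \<in> simps K \<and> snd ` s \<in> simps L})"

definition interval_cpx :: "nat \<Rightarrow> nat cpx" where
  "interval_cpx n = ({0..n}, {{i} | i. i \<le> n} \<union> {{i, i+1} | i. i < n})"

definition times_homotopic :: "'v cpx \<Rightarrow> 'w cpx \<Rightarrow> ('v \<Rightarrow> 'w) \<Rightarrow> ('v \<Rightarrow> 'w) \<Rightarrow> bool" where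
  "times_homotopic K L f g \<longleftrightarrow>
     (\<exists>n\<ge>1. \<exists>H. cpx_map (cpx_prod K (interval_cpx n)) L H \<and>
        (\<forall>v\<in>verts K. H (v, 0) = f v \<and> H (v, n) = g v))"

definition times_htpy_equiv :: "'v cpx \<Rightarrow> 'w cpx \<Rightarrow> ('v \<Rightarrow> 'w) \<Rightarrow> bool" where
  "times_htpy_equiv K L f \<longleftrightarrow> cpx_map K L f \<and>
     (\<exists>g. cpx_map L K g \<and> times_homotopic K K (g \<circ> f) id \<and> times_homotopic L L (f \<circ> g) id)"

definition full_simplex :: "nat \<Rightarrow> nat cpx" where
  "full_simplex n = ({0..n}, {s. s \<noteq> {} \<and> s \<subseteq> {0..n}})"

text \<open>A simplicial set is given by its sets of n-simplices X n and the action
  act m n \<theta> : X n \<rightarrow> X m of simplicial operators, i.e. monotone maps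
  \<theta> : [m] \<rightarrow> [n] (represented by functions nat \<Rightarrow> nat; only values on {0..m} matter).\<close>
type_synonym 'a sset = "(nat \<Rightarrow> 'a set) \<times> (nat \<Rightarrow> nat \<Rightarrow> (nat \<Rightarrow> nat) \<Rightarrow> 'a \<Rightarrow> 'a)"

definition ssimp :: "'a sset \<Rightarrow> nat \<Rightarrow> 'a set" where "ssimp X = fst X"
definition sact :: "'a sset \<Rightarrow> nat \<Rightarrow> nat \<Rightarrow> (nat \<Rightarrow> nat) \<Rightarrow> 'a \<Rightarrow> 'a" where "sact X = snd X"

definition simp_op :: "nat \<Rightarrow> nat \<Rightarrow> (nat \<Rightarrow> nat) \<Rightarrow> bool" where
  "simp_op m n \<theta> \<longleftrightarrow> mono_on {0..m} \<theta> \<and> \<theta> ` {0..m} \<subseteq> {0..n}"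

text \<open>Singular simplicial set of a complex: Sing(K)_n = Cpx(Delta^n, K), with maps
  normalised to be undefined outside {0..n}; operators act by precomposition.\<close>
definition Sing :: "'v cpx \<Rightarrow> (nat \<Rightarrow> 'v) sset" where
  "Sing K = ((\<lambda>n. {\<sigma>. cpx_map (full_simplex n) K \<sigma> \<and> (\<forall>i>n. \<sigma> i = undefined)}),
             (\<lambda>m n \<theta> \<sigma>. (\<lambda>i. if i \<le> m then \<sigma> (\<theta> i) else undefined)))"

definition Sing_map :: "('v \<Rightarrow> 'w) \<Rightarrow> nat \<Rightarrow> (nat \<Rightarrow> 'v) \<Rightarrow> (nat \<Rightarrow> 'w)" where
  "Sing_map f n \<sigma> = (\<lambda>i. if i \<le> n then f (\<sigma> i) else undefined)"

definition simplex_top :: "nat \<Rightarrow> (nat \<Rightarrow> real) topology" where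
  "simplex_top n = subtopology (powertop_real UNIV) (standard_simplex n)"

text \<open>Induced affine map \<theta>_* : Delta^m \<rightarrow> Delta^n on barycentric coordinates.\<close>
definition simplex_push :: "nat \<Rightarrow> (nat \<Rightarrow> nat) \<Rightarrow> (nat \<Rightarrow> real) \<Rightarrow> (nat \<Rightarrow> real)" where
  "simplex_push m \<theta> t = (\<lambda>j. \<Sum>i\<in>{i. i \<le> m \<and> \<theta> i = j}. t i)"

definition real_pre :: "'a sset \<Rightarrow> (nat \<times> ('a \<times> (nat \<Rightarrow> real))) topology" where
  "real_pre X = sum_topology (\<lambda>n. prod_topology (discrete_topology (ssimp X n)) (simplex_top n)) UNIV"

definition real_gen :: "'a sset \<Rightarrow> ((nat \<times> ('a \<times> (nat \<Rightarrow> real))) \<times> (nat \<times> ('a \<times> (nat \<Rightarrow> real)))) set" where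
  "real_gen X = {((m, (sact X m n \<theta> x, t)), (n, (x, simplex_push m \<theta> t))) | m n \<theta> x t.
      simp_op m n \<theta> \<and> x \<in> ssimp X n \<and> t \<in> standard_simplex m}"

definition real_rel :: "'a sset \<Rightarrow> ((nat \<times> ('a \<times> (nat \<Rightarrow> real))) \<times> (nat \<times> ('a \<times> (nat \<Rightarrow> real)))) set" where
  "real_rel X = (Id_on (topspace (real_pre X)) \<union>
      (real_gen X \<inter> (topspace (real_pre X) \<times> topspace (real_pre X))) \<union>
      (real_gen X \<inter> (topspace (real_pre X) \<times> topspace (real_pre X)))\<inverse>)\<^sup>*"

definition quotient_topology :: "'p topology \<Rightarrow> ('p \<times> 'p) set \<Rightarrow> 'p set topology" where
  "quotient_topology T R = topology (\<lambda>U. U \<subseteq> topspace T // R \<and> openin T (\<Union>U))"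

definition realization :: "'a sset \<Rightarrow> (nat \<times> ('a \<times> (nat \<Rightarrow> real))) set topology" where
  "realization X = quotient_topology (real_pre X) (real_rel X)"

definition realization_map :: "'b sset \<Rightarrow> (nat \<Rightarrow> 'a \<Rightarrow> 'b) \<Rightarrow>
    (nat \<times> ('a \<times> (nat \<Rightarrow> real))) set \<Rightarrow> (nat \<times> ('b \<times> (nat \<Rightarrow> real))) set" where
  "realization_map Y f C = real_rel Y `` ((\<lambda>(n, (x, t)). (n, (f n x, t))) ` C)"

text \<open>Weak equivalence of simplicial sets (Kan--Quillen): the geometric realization
  of the map is a homotopy equivalence.\<close>
definition sset_weak_equiv :: "'a sset \<Rightarrow> 'b sset \<Rightarrow> (nat \<Rightarrow> 'a \<Rightarrow> 'b) \<Rightarrow> bool" where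
  "sset_weak_equiv X Y f \<longleftrightarrow>
     (let F = realization_map Y f in
       continuous_map (realization X) (realization Y) F \<and>
       (\<exists>G. continuous_map (realization Y) (realization X) G \<and>
            homotopic_with (\<lambda>h. True) (realization X) (realization X) (G \<circ> F) id \<and>
            homotopic_with (\<lambda>h. True) (realization Y) (realization Y) (F \<circ> G) id))"

end

theory Submission
  imports Defs
begin

text \<open>A \<open>\<times>\<close>-homotopy \<open>H : K \<times> I\<^sub>n \<rightarrow> L\<close> from \<open>f\<close> to \<open>g\<close> is a chain of maps
  \<open>f = H(-,0), \<dots>, H(-,n) = g\<close> in which consecutive maps \<open>h, h'\<close> are contiguous: \<open>h s \<union> h' s\<close>
  is a simplex of \<open>L\<close> for every simplex \<open>s\<close> of \<open>K\<close>. For contiguous \<open>h, h'\<close> every singular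
  \<open>m\<close>-simplex \<open>\<sigma>\<close> of \<open>K\<close> yields the singular \<open>(2m+1)\<close>-simplex \<open>(h \<sigma>, h' \<sigma>)\<close> of \<open>L\<close>, the join of
  \<open>h \<sigma>\<close> and \<open>h' \<sigma>\<close>, and \<open>(s, [\<sigma>, t]) \<mapsto> [(h \<sigma>, h' \<sigma>), ((1 - s) t, s t)]\<close> respects the
  identifications made in the geometric realization, so it is a homotopy from \<open>|Sing h|\<close> to
  \<open>|Sing h'|\<close>. Since \<open>|Sing -|\<close> is a functor, a \<open>\<times>\<close>-homotopy inverse \<open>g\<close> of \<open>f\<close> makes
  \<open>|Sing g|\<close> a homotopy inverse of \<open>|Sing f|\<close>.\<close>

section \<open>Sum and quotient topologies\<close>

lemma continuous_map_from_sum_topology: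
  assumes "\<And>i. i \<in> I \<Longrightarrow> continuous_map (X i) Y (\<lambda>x. f (i, x))"
  shows "continuous_map (sum_topology X I) Y f"
  unfolding continuous_map_def
proof (intro conjI allI impI)
  show "f \<in> topspace (sum_topology X I) \<rightarrow> topspace Y"
    using assms by (force simp: continuous_map_def)
  fix U assume "openin Y U"
  then have "openin (X i) {x \<in> topspace (X i). f (i, x) \<in> U}" if "i \<in> I" for i
    using assms[OF that] openin_continuous_map_preimage by blast
  then show "openin (sum_topology X I) {p \<in> topspace (sum_topology X I). f p \<in> U}"
    by (auto simp: openin_sum_topology)
qed

lemma continuous_map_from_prod_sum_topology:
  assumes "\<And>i. i \<in> I \<Longrightarrow> continuous_map (prod_topology Z (X i)) Y (\<lambda>(z, x). f (z, (i, x)))"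
  shows "continuous_map (prod_topology Z (sum_topology X I)) Y f"
  unfolding continuous_map_def
proof (intro conjI allI impI)
  show "f \<in> topspace (prod_topology Z (sum_topology X I)) \<rightarrow> topspace Y"
    using assms by (force simp: continuous_map_def)
  fix U assume U: "openin Y U"
  let ?ZX = "prod_topology Z (sum_topology X I)"
  show "openin ?ZX {p \<in> topspace ?ZX. f p \<in> U}"
  proof (subst openin_subopen, intro ballI)
    fix p assume p: "p \<in> {p \<in> topspace ?ZX. f p \<in> U}"
    then obtain z i x where p_eq: "p = (z, (i, x))" and i: "i \<in> I"
      by auto
    define N where "N = {q \<in> topspace (prod_topology Z (X i)). f (fst q, (i, snd q)) \<in> U}"
    have "openin (prod_topology Z (X i)) N"
      using openin_continuous_map_preimage[OF assms[OF i] U] by (simp add: N_def case_prod_unfold)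
    moreover have "(z, x) \<in> N"
      using p p_eq by (simp add: N_def)
    ultimately obtain V W where V: "openin Z V" and W: "openin (X i) W" and "z \<in> V" "x \<in> W"
      and VW: "V \<times> W \<subseteq> N"
      by (metis openin_prod_topology_alt)
    have "openin (sum_topology X I) (Pair i ` W)"
      using open_map_component_injection[OF i, of X] W by (simp add: open_map_def)
    then have "openin ?ZX (V \<times> Pair i ` W)"
      using V by (simp add: openin_prod_Times_iff)
    moreover have "V \<times> Pair i ` W \<subseteq> {p \<in> topspace ?ZX. f p \<in> U}"
      using VW i by (auto simp: N_def)
    ultimately show "\<exists>T. openin ?ZX T \<and> p \<in> T \<and> T \<subseteq> {p \<in> topspace ?ZX. f p \<in> U}"
      using p_eq \<open>z \<in> V\<close> \<open>x \<in> W\<close> by blast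
  qed
qed

lemma prod_discrete_topology_eq_sum_topology:
  "prod_topology (discrete_topology A) X = sum_topology (\<lambda>a. X) A"
proof (rule topology_eq[THEN iffD2], intro allI iffI)
  fix S assume S: "openin (prod_topology (discrete_topology A) X) S"
  have "openin X {x. (a, x) \<in> S}" for a
  proof (subst openin_subopen, intro ballI)
    fix x assume "x \<in> {x. (a, x) \<in> S}"
    then obtain U V where "openin X V" "a \<in> U" "x \<in> V" "U \<times> V \<subseteq> S"
      using S by (metis openin_prod_topology_alt mem_Collect_eq)
    then show "\<exists>T. openin X T \<and> x \<in> T \<and> T \<subseteq> {x. (a, x) \<in> S}" by auto
  qed
  then show "openin (sum_topology (\<lambda>a. X) A) S"
    using openin_subset[OF S] by (simp add: openin_sum_topology o_def)
next
  fix S assume S: "openin (sum_topology (\<lambda>a. X) A) S"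
  show "openin (prod_topology (discrete_topology A) X) S"
    unfolding openin_prod_topology_alt
  proof (intro allI impI)
    fix a x assume ax: "(a, x) \<in> S"
    then have "a \<in> A" "openin X {x. (a, x) \<in> S}"
      using S by (auto simp: openin_sum_topology)
    then show "\<exists>U V. openin (discrete_topology A) U \<and> openin X V \<and> a \<in> U \<and> x \<in> V \<and> U \<times> V \<subseteq> S"
      using ax by (intro exI[of _ "{a}"] exI[of _ "{x. (a, x) \<in> S}"]) auto
  qed
qed

context
  fixes T :: "'p topology" and R :: "('p \<times> 'p) set"
  assumes equiv_R: "equiv UNIV R" and R_closed: "R `` topspace T \<subseteq> topspace T"
begin

lemma Union_quotient_topspace: "\<Union>(topspace T // R) = topspace T"
  using R_closed equiv_class_self[OF equiv_R] by (auto simp: quotient_def)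

lemma istopology_quotient: "istopology (\<lambda>U. U \<subseteq> topspace T // R \<and> openin T (\<Union>U))"
  unfolding istopology_def
proof (rule conjI; intro allI impI)
  fix U V
  assume U: "U \<subseteq> topspace T // R \<and> openin T (\<Union>U)" and V: "V \<subseteq> topspace T // R \<and> openin T (\<Union>V)"
  have "UNIV // R \<supseteq> topspace T // R" by (auto simp: quotient_def)
  then have "C = D \<or> C \<inter> D = {}" if "C \<in> U" "D \<in> V" for C D
    using quotient_disj[OF equiv_R] U V that by blast
  then have "\<Union>(U \<inter> V) = \<Union>U \<inter> \<Union>V" by blast
  then show "U \<inter> V \<subseteq> topspace T // R \<and> openin T (\<Union>(U \<inter> V))"
    using U V by auto
next
  fix \<U> assume \<U>: "\<forall>U\<in>\<U>. U \<subseteq> topspace T // R \<and> openin T (\<Union>U)"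
  have "openin T (\<Union>U\<in>\<U>. \<Union>U)"
    using \<U> by (intro openin_Union) auto
  moreover have "\<Union>(\<Union>\<U>) = (\<Union>U\<in>\<U>. \<Union>U)" by blast
  ultimately show "\<Union>\<U> \<subseteq> topspace T // R \<and> openin T (\<Union>(\<Union>\<U>))"
    using \<U> by auto
qed

lemma openin_quotient_topology:
  "openin (quotient_topology T R) U \<longleftrightarrow> U \<subseteq> topspace T // R \<and> openin T (\<Union>U)"
  by (simp add: quotient_topology_def topology_inverse'[OF istopology_quotient])

lemma topspace_quotient_topology: "topspace (quotient_topology T R) = topspace T // R"
  by (metis Union_quotient_topspace openin_quotient_topology openin_subset openin_topspace
      order_refl subset_antisym)

lemma quotient_map_quotient_topology: "quotient_map T (quotient_topology T R) (\<lambda>x. R `` {x})"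
  unfolding quotient_map_def topspace_quotient_topology
proof (intro conjI allI impI)
  show "(\<lambda>x. R `` {x}) ` topspace T = topspace T // R"
    by (auto simp: quotient_def)
  fix U assume U: "U \<subseteq> topspace T // R"
  have "{x \<in> topspace T. R `` {x} \<in> U} = \<Union>U"
  proof
    show "\<Union>U \<subseteq> {x \<in> topspace T. R `` {x} \<in> U}"
    proof
      fix x assume "x \<in> \<Union>U"
      then obtain y where "y \<in> topspace T" "R `` {y} \<in> U" "x \<in> R `` {y}"
        using U by (auto simp: quotient_def)
      then show "x \<in> {x \<in> topspace T. R `` {x} \<in> U}"
        using R_closed equiv_class_eq[OF equiv_R, of y x] by auto
    qed
  qed (use equiv_class_self[OF equiv_R UNIV_I] in blast)
  then show "openin T {x \<in> topspace T. R `` {x} \<in> U} \<longleftrightarrow> openin (quotient_topology T R) U"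
    using U by (simp add: openin_quotient_topology)
qed

end

section \<open>Geometric realization\<close>

lemma topspace_real_pre:
  "topspace (real_pre X) = {(n, (x, t)). x \<in> ssimp X n \<and> t \<in> standard_simplex n}"
  by (auto simp: real_pre_def simplex_top_def)

lemma real_pre_eq_sum_topology:
  "real_pre X = sum_topology (\<lambda>n. sum_topology (\<lambda>x. simplex_top n) (ssimp X n)) UNIV"
  by (simp add: real_pre_def prod_discrete_topology_eq_sum_topology)

lemma continuous_map_from_real_pre:
  assumes "\<And>n x. x \<in> ssimp X n \<Longrightarrow> continuous_map (simplex_top n) Y (\<lambda>t. f (n, (x, t)))"
  shows "continuous_map (real_pre X) Y f"
  unfolding real_pre_eq_sum_topology
  by (intro continuous_map_from_sum_topology) (simp add: assms)

lemma continuous_map_from_prod_real_pre: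
  assumes "\<And>n x. x \<in> ssimp X n \<Longrightarrow>
    continuous_map (prod_topology Z (simplex_top n)) Y (\<lambda>(z, t). f (z, (n, (x, t))))"
  shows "continuous_map (prod_topology Z (real_pre X)) Y f"
  unfolding real_pre_eq_sum_topology
  by (intro continuous_map_from_prod_sum_topology) (simp add: assms)

lemma continuous_map_into_real_pre:
  assumes "x \<in> ssimp X n"
  shows "continuous_map (simplex_top n) (real_pre X) (\<lambda>t. (n, (x, t)))"
proof -
  have "continuous_map (simplex_top n) (sum_topology (\<lambda>x. simplex_top n) (ssimp X n)) (\<lambda>t. (x, t))"
    using continuous_map_component_injection[of x "ssimp X n" "\<lambda>_. simplex_top n"] assms by simp
  moreover have "continuous_map (sum_topology (\<lambda>x. simplex_top n) (ssimp X n)) (real_pre X) (\<lambda>y. (n, y))"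
    unfolding real_pre_eq_sum_topology
    using continuous_map_component_injection[of n UNIV "\<lambda>n. sum_topology (\<lambda>x. simplex_top n) (ssimp X n)"]
    by simp
  ultimately show ?thesis
    using continuous_map_compose by (fastforce simp: o_def)
qed

definition real_class :: "'a sset \<Rightarrow> nat \<times> ('a \<times> (nat \<Rightarrow> real)) \<Rightarrow> (nat \<times> ('a \<times> (nat \<Rightarrow> real))) set"
  where "real_class X p = real_rel X `` {p}"

lemma equiv_real_rel: "equiv UNIV (real_rel X)"
  unfolding real_rel_def
  by (intro equivI refl_rtrancl sym_rtrancl trans_rtrancl) (auto simp: sym_def)

lemma real_rel_closed: "real_rel X `` topspace (real_pre X) \<subseteq> topspace (real_pre X)"
proof
  fix q assume "q \<in> real_rel X `` topspace (real_pre X)"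
  then obtain p where "(p, q) \<in> real_rel X" "p \<in> topspace (real_pre X)" by auto
  then show "q \<in> topspace (real_pre X)"
    unfolding real_rel_def by (induction rule: rtrancl_induct) auto
qed

lemma topspace_realization: "topspace (realization X) = topspace (real_pre X) // real_rel X"
  unfolding realization_def by (rule topspace_quotient_topology[OF equiv_real_rel real_rel_closed])

lemma quotient_map_real_class: "quotient_map (real_pre X) (realization X) (real_class X)"
  unfolding realization_def real_class_def[abs_def]
  by (rule quotient_map_quotient_topology[OF equiv_real_rel real_rel_closed])

lemma real_class_eq_iff: "real_class X p = real_class X q \<longleftrightarrow> (p, q) \<in> real_rel X"
  unfolding real_class_def by (simp add: eq_equiv_class_iff[OF equiv_real_rel])

lemma realization_pointE:
  assumes "C \<in> topspace (realization X)"
  obtains n x t where "x \<in> ssimp X n" "t \<in> standard_simplex n" "C = real_class X (n, (x, t))"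
  using assms by (auto simp: topspace_realization quotient_def topspace_real_pre real_class_def)

lemma real_class_subset_topspace:
  "p \<in> topspace (real_pre X) \<Longrightarrow> real_class X p \<subseteq> topspace (real_pre X)"
  unfolding real_class_def using real_rel_closed[of X] by blast

lemma real_rel_respects:
  assumes "\<And>p q. \<lbrakk>(p, q) \<in> real_gen X; p \<in> topspace (real_pre X); q \<in> topspace (real_pre X)\<rbrakk>
    \<Longrightarrow> F p = F q"
  shows "F respects real_rel X"
proof (rule congruentI)
  fix p q assume "(p, q) \<in> real_rel X"
  then show "F p = F q"
    unfolding real_rel_def
  proof (induction rule: rtrancl_induct)
    case (step y z)
    from step.hyps(2) consider "y = z"
      | "(y, z) \<in> real_gen X" "y \<in> topspace (real_pre X)" "z \<in> topspace (real_pre X)"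
      | "(z, y) \<in> real_gen X" "y \<in> topspace (real_pre X)" "z \<in> topspace (real_pre X)"
      by blast
    then have "F y = F z" by cases (auto dest: assms)
    with step.IH show ?case by simp
  qed simp
qed

lemma real_class_sact:
  assumes "simp_op m n \<theta>" "x \<in> ssimp X n" "sact X m n \<theta> x \<in> ssimp X m"
    and "t \<in> standard_simplex m" "simplex_push m \<theta> t \<in> standard_simplex n"
  shows "real_class X (m, (sact X m n \<theta> x, t)) = real_class X (n, (x, simplex_push m \<theta> t))"
proof -
  have "((m, (sact X m n \<theta> x, t)), (n, (x, simplex_push m \<theta> t))) \<in> real_gen X"
    using assms unfolding real_gen_def by blast
  then show ?thesis
    using assms unfolding real_class_eq_iff real_rel_def
    by (intro r_into_rtrancl) (auto simp: topspace_real_pre)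
qed

definition simplicial_map :: "'a sset \<Rightarrow> 'b sset \<Rightarrow> (nat \<Rightarrow> 'a \<Rightarrow> 'b) \<Rightarrow> bool" where
  "simplicial_map X Y \<phi> \<longleftrightarrow> (\<forall>n. \<forall>x \<in> ssimp X n. \<phi> n x \<in> ssimp Y n) \<and>
     (\<forall>m n \<theta>. \<forall>x \<in> ssimp X n. simp_op m n \<theta> \<longrightarrow> \<phi> m (sact X m n \<theta> x) = sact Y m n \<theta> (\<phi> n x))"

lemma simplicial_map_ident: "simplicial_map X X (\<lambda>n x. x)"
  by (simp add: simplicial_map_def)

lemma simplicial_map_comp:
  "simplicial_map X Y \<phi> \<Longrightarrow> simplicial_map Y Z \<psi> \<Longrightarrow> simplicial_map X Z (\<lambda>n. \<psi> n \<circ> \<phi> n)"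
  by (simp add: simplicial_map_def)

definition real_pre_map :: "(nat \<Rightarrow> 'a \<Rightarrow> 'b) \<Rightarrow>
    nat \<times> ('a \<times> (nat \<Rightarrow> real)) \<Rightarrow> nat \<times> ('b \<times> (nat \<Rightarrow> real))"
  where "real_pre_map \<phi> = (\<lambda>(n, (x, t)). (n, (\<phi> n x, t)))"

lemma real_pre_map_simp [simp]: "real_pre_map \<phi> (n, (x, t)) = (n, (\<phi> n x, t))"
  by (simp add: real_pre_map_def)

lemma realization_map_eq: "realization_map Y \<phi> C = real_rel Y `` (real_pre_map \<phi> ` C)"
  by (simp add: realization_map_def real_pre_map_def)

lemma real_class_real_pre_map_respects:
  assumes \<phi>: "simplicial_map X Y \<phi>"
  shows "(\<lambda>p. real_class Y (real_pre_map \<phi> p)) respects real_rel X"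
proof (rule real_rel_respects)
  fix p q assume "(p, q) \<in> real_gen X" and p: "p \<in> topspace (real_pre X)" and q: "q \<in> topspace (real_pre X)"
  then obtain m n \<theta> x t where p_eq: "p = (m, (sact X m n \<theta> x, t))"
    and q_eq: "q = (n, (x, simplex_push m \<theta> t))" and \<theta>: "simp_op m n \<theta>" and x: "x \<in> ssimp X n"
    unfolding real_gen_def by blast
  have t: "t \<in> standard_simplex m" and push: "simplex_push m \<theta> t \<in> standard_simplex n"
    and sx: "sact X m n \<theta> x \<in> ssimp X m"
    using p q by (auto simp: p_eq q_eq topspace_real_pre)
  have eq: "\<phi> m (sact X m n \<theta> x) = sact Y m n \<theta> (\<phi> n x)"
    using \<phi> \<theta> x by (simp add: simplicial_map_def)
  have "\<phi> n x \<in> ssimp Y n" "\<phi> m (sact X m n \<theta> x) \<in> ssimp Y m"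
    using \<phi> x sx unfolding simplicial_map_def by blast+
  then show "real_class Y (real_pre_map \<phi> p) = real_class Y (real_pre_map \<phi> q)"
    unfolding p_eq q_eq real_pre_map_simp eq by (intro real_class_sact[OF \<theta>] t push)
qed

lemma realization_map_real_class:
  assumes "simplicial_map X Y \<phi>"
  shows "realization_map Y \<phi> (real_class X p) = real_class Y (real_pre_map \<phi> p)"
proof -
  have "realization_map Y \<phi> (real_class X p) = (\<Union>q \<in> real_class X p. real_class Y (real_pre_map \<phi> q))"
    by (auto simp: realization_map_eq real_class_def)
  also have "\<dots> = real_class Y (real_pre_map \<phi> p)"
  proof -
    have "real_class Y (real_pre_map \<phi> q) = real_class Y (real_pre_map \<phi> p)" if "q \<in> real_class X p" for q
      using congruentD[OF real_class_real_pre_map_respects[OF assms], of p q] that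
      by (simp add: real_class_def)
    moreover have "p \<in> real_class X p"
      unfolding real_class_def by (rule equiv_class_self[OF equiv_real_rel UNIV_I])
    ultimately show ?thesis by blast
  qed
  finally show ?thesis .
qed

lemma continuous_map_realization_map:
  assumes "simplicial_map X Y \<phi>"
  shows "continuous_map (realization X) (realization Y) (realization_map Y \<phi>)"
proof (rule continuous_compose_quotient_map[OF quotient_map_real_class])
  have "continuous_map (real_pre X) (real_pre Y) (real_pre_map \<phi>)"
    using assms by (intro continuous_map_from_real_pre)
      (simp add: continuous_map_into_real_pre simplicial_map_def)
  then have "continuous_map (real_pre X) (realization Y) (real_class Y \<circ> real_pre_map \<phi>)"
    using quotient_imp_continuous_map[OF quotient_map_real_class] by (rule continuous_map_compose)
  then show "continuous_map (real_pre X) (realization Y) (realization_map Y \<phi> \<circ> real_class X)"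
    by (simp add: o_def realization_map_real_class[OF assms])
qed

lemma realization_map_cong:
  assumes "\<And>n x. x \<in> ssimp X n \<Longrightarrow> \<phi> n x = \<psi> n x" and "C \<in> topspace (realization X)"
  shows "realization_map Y \<phi> C = realization_map Y \<psi> C"
proof -
  obtain n x t where "x \<in> ssimp X n" "t \<in> standard_simplex n" and C: "C = real_class X (n, (x, t))"
    using realization_pointE[OF assms(2)] .
  then have "C \<subseteq> topspace (real_pre X)"
    using real_class_subset_topspace[of "(n, (x, t))" X] by (simp add: topspace_real_pre)
  then have "real_pre_map \<phi> ` C = real_pre_map \<psi> ` C"
    using assms(1) by (intro image_cong) (auto simp: topspace_real_pre)
  then show ?thesis by (simp add: realization_map_eq)
qed

lemma realization_map_comp:
  assumes "simplicial_map X Y \<phi>" "simplicial_map Y Z \<psi>" "C \<in> topspace (realization X)"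
  shows "realization_map Z \<psi> (realization_map Y \<phi> C) = realization_map Z (\<lambda>n. \<psi> n \<circ> \<phi> n) C"
proof -
  obtain n x t where C: "C = real_class X (n, (x, t))"
    using realization_pointE[OF assms(3)] .
  show ?thesis
    unfolding C using assms(1,2) simplicial_map_comp[OF assms(1,2)]
    by (simp add: realization_map_real_class)
qed

lemma realization_map_ident:
  assumes "\<And>n x. x \<in> ssimp X n \<Longrightarrow> \<phi> n x = x" and "C \<in> topspace (realization X)"
  shows "realization_map X \<phi> C = C"
proof -
  obtain n x t where C: "C = real_class X (n, (x, t))"
    using realization_pointE[OF assms(2)] .
  have "realization_map X \<phi> C = realization_map X (\<lambda>n x. x) C"
    using assms by (rule realization_map_cong)
  also have "\<dots> = C"
    unfolding C by (simp add: realization_map_real_class[OF simplicial_map_ident])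
  finally show ?thesis .
qed

section \<open>The singular simplicial set of a complex\<close>

lemma cpx_face: "is_cpx K \<Longrightarrow> s \<in> simps K \<Longrightarrow> t \<subseteq> s \<Longrightarrow> t \<noteq> {} \<Longrightarrow> t \<in> simps K"
  unfolding is_cpx_def by blast

lemma cpx_simplex_subset_verts: "is_cpx K \<Longrightarrow> s \<in> simps K \<Longrightarrow> s \<subseteq> verts K"
  unfolding is_cpx_def by blast

lemma cpx_simplex_nonempty: "is_cpx K \<Longrightarrow> s \<in> simps K \<Longrightarrow> s \<noteq> {}"
  unfolding is_cpx_def by blast

lemma cpx_vertex_simplex: "is_cpx K \<Longrightarrow> v \<in> verts K \<Longrightarrow> {v} \<in> simps K"
  unfolding is_cpx_def by blast

lemma simp_op_le: "simp_op m n \<theta> \<Longrightarrow> i \<le> m \<Longrightarrow> \<theta> i \<le> n"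
  unfolding simp_op_def by (auto simp: image_subset_iff)

lemma simp_op_mono: "simp_op m n \<theta> \<Longrightarrow> i \<le> j \<Longrightarrow> j \<le> m \<Longrightarrow> \<theta> i \<le> \<theta> j"
  unfolding simp_op_def by (auto intro: monotone_onD)

lemma sact_Sing: "sact (Sing K) m n \<theta> \<sigma> = (\<lambda>i. if i \<le> m then \<sigma> (\<theta> i) else undefined)"
  by (simp add: sact_def Sing_def)

lemma ssimp_Sing:
  "ssimp (Sing K) n = {\<sigma>. cpx_map (full_simplex n) K \<sigma> \<and> (\<forall>i>n. \<sigma> i = undefined)}"
  by (simp add: ssimp_def Sing_def)

lemma Sing_vertex: "\<sigma> \<in> ssimp (Sing K) n \<Longrightarrow> i \<le> n \<Longrightarrow> \<sigma> i \<in> verts K"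
  by (simp add: ssimp_Sing cpx_map_def full_simplex_def verts_def)

lemma mem_ssimp_Sing_iff:
  assumes K: "is_cpx K"
  shows "\<sigma> \<in> ssimp (Sing K) n \<longleftrightarrow> \<sigma> ` {0..n} \<in> simps K \<and> (\<forall>i>n. \<sigma> i = undefined)"
proof
  assume "\<sigma> \<in> ssimp (Sing K) n"
  then show "\<sigma> ` {0..n} \<in> simps K \<and> (\<forall>i>n. \<sigma> i = undefined)"
    by (simp add: ssimp_Sing cpx_map_def full_simplex_def simps_def)
next
  assume \<sigma>: "\<sigma> ` {0..n} \<in> simps K \<and> (\<forall>i>n. \<sigma> i = undefined)"
  then have "\<sigma> ` s \<in> simps K" if "s \<noteq> {}" "s \<subseteq> {0..n}" for s
    using cpx_face[OF K, of "\<sigma> ` {0..n}" "\<sigma> ` s"] that by blast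
  moreover have "\<sigma> i \<in> verts K" if "i \<le> n" for i
    using cpx_simplex_subset_verts[OF K] \<sigma> that by fastforce
  ultimately show "\<sigma> \<in> ssimp (Sing K) n"
    using \<sigma> by (simp add: ssimp_Sing cpx_map_def full_simplex_def simps_def verts_def)
qed

lemma simplicial_map_Sing_map:
  assumes K: "is_cpx K" and L: "is_cpx L" and f: "cpx_map K L f"
  shows "simplicial_map (Sing K) (Sing L) (Sing_map f)"
  unfolding simplicial_map_def
proof (intro conjI allI ballI impI)
  fix n \<sigma> assume \<sigma>: "\<sigma> \<in> ssimp (Sing K) n"
  have "Sing_map f n \<sigma> ` {0..n} = f ` \<sigma> ` {0..n}"
    by (auto simp: Sing_map_def)
  then show "Sing_map f n \<sigma> \<in> ssimp (Sing L) n"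
    using \<sigma> f by (simp add: mem_ssimp_Sing_iff[OF K] mem_ssimp_Sing_iff[OF L] cpx_map_def Sing_map_def)
next
  fix m n \<theta> \<sigma> assume "simp_op m n \<theta>"
  then show "Sing_map f m (sact (Sing K) m n \<theta> \<sigma>) = sact (Sing L) m n \<theta> (Sing_map f n \<sigma>)"
    by (auto simp: Sing_map_def sact_Sing simp_op_le)
qed

lemma Sing_map_comp: "(\<lambda>n. Sing_map g n \<circ> Sing_map f n) = Sing_map (g \<circ> f)"
  by (auto simp: fun_eq_iff Sing_map_def)

lemma realization_map_Sing_map_comp:
  assumes "is_cpx K" "is_cpx L" "is_cpx M" "cpx_map K L f" "cpx_map L M g"
    and "C \<in> topspace (realization (Sing K))"
  shows "realization_map (Sing M) (Sing_map g) (realization_map (Sing L) (Sing_map f) C)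
    = realization_map (Sing M) (Sing_map (g \<circ> f)) C"
  using realization_map_comp[OF simplicial_map_Sing_map simplicial_map_Sing_map] assms
  by (simp add: Sing_map_comp)

lemma realization_map_Sing_map_id:
  assumes "C \<in> topspace (realization (Sing K))"
  shows "realization_map (Sing K) (Sing_map id) C = C"
proof (rule realization_map_ident[OF _ assms])
  fix n \<sigma> assume "\<sigma> \<in> ssimp (Sing K) n"
  then show "Sing_map id n \<sigma> = \<sigma>"
    by (auto simp: Sing_map_def ssimp_Sing)
qed

lemma realization_map_Sing_map_cong:
  assumes "\<And>v. v \<in> verts K \<Longrightarrow> f v = g v" and "C \<in> topspace (realization (Sing K))"
  shows "realization_map (Sing L) (Sing_map f) C = realization_map (Sing L) (Sing_map g) C"
proof (rule realization_map_cong[OF _ assms(2)])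
  fix n \<sigma> assume "\<sigma> \<in> ssimp (Sing K) n"
  then show "Sing_map f n \<sigma> = Sing_map g n \<sigma>"
    using assms(1) by (auto simp: Sing_map_def Sing_vertex)
qed

section \<open>Contiguous maps and the join homotopy\<close>

definition contiguous :: "'v cpx \<Rightarrow> 'w cpx \<Rightarrow> ('v \<Rightarrow> 'w) \<Rightarrow> ('v \<Rightarrow> 'w) \<Rightarrow> bool" where
  "contiguous K L h0 h1 \<longleftrightarrow> (\<forall>s\<in>simps K. h0 ` s \<union> h1 ` s \<in> simps L)"

lemma contiguous_sym: "contiguous K L h0 h1 \<Longrightarrow> contiguous K L h1 h0"
  by (simp add: contiguous_def Un_commute)

lemma contiguous_imp_cpx_map:
  assumes K: "is_cpx K" and L: "is_cpx L" and c: "contiguous K L h0 h1"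
  shows "cpx_map K L h0"
  unfolding cpx_map_def
proof (intro conjI ballI)
  fix s assume s: "s \<in> simps K"
  then show "h0 ` s \<in> simps L"
    using c cpx_face[OF L] cpx_simplex_nonempty[OF K s] by (fastforce simp: contiguous_def)
next
  fix v assume "v \<in> verts K"
  then have "{v} \<in> simps K"
    by (rule cpx_vertex_simplex[OF K])
  then have "h0 ` {v} \<union> h1 ` {v} \<in> simps L"
    using c unfolding contiguous_def by blast
  then show "h0 v \<in> verts L"
    using cpx_simplex_subset_verts[OF L] by blast
qed

definition join_simplex :: "('v \<Rightarrow> 'w) \<Rightarrow> ('v \<Rightarrow> 'w) \<Rightarrow> nat \<Rightarrow> (nat \<Rightarrow> 'v) \<Rightarrow> (nat \<Rightarrow> 'w)" where
  "join_simplex h0 h1 m \<sigma> =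
    (\<lambda>i. if i \<le> m then h0 (\<sigma> i) else if i \<le> 2*m+1 then h1 (\<sigma> (i - Suc m)) else undefined)"

lemma image_join_simplex:
  "join_simplex h0 h1 m \<sigma> ` {0..2*m+1} = h0 ` \<sigma> ` {0..m} \<union> h1 ` \<sigma> ` {0..m}"
proof
  show "join_simplex h0 h1 m \<sigma> ` {0..2*m+1} \<subseteq> h0 ` \<sigma> ` {0..m} \<union> h1 ` \<sigma> ` {0..m}"
    by (auto simp: join_simplex_def)
  have "h0 (\<sigma> i) \<in> join_simplex h0 h1 m \<sigma> ` {0..2*m+1}"
    and "h1 (\<sigma> i) \<in> join_simplex h0 h1 m \<sigma> ` {0..2*m+1}" if "i \<le> m" for i
    using that by (auto simp: join_simplex_def intro!: rev_image_eqI[of i] rev_image_eqI[of "i + Suc m"])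
  then show "h0 ` \<sigma> ` {0..m} \<union> h1 ` \<sigma> ` {0..m} \<subseteq> join_simplex h0 h1 m \<sigma> ` {0..2*m+1}"
    by auto
qed

lemma join_simplex_in_Sing:
  assumes K: "is_cpx K" and L: "is_cpx L" and c: "contiguous K L h0 h1"
    and \<sigma>: "\<sigma> \<in> ssimp (Sing K) m"
  shows "join_simplex h0 h1 m \<sigma> \<in> ssimp (Sing L) (2*m+1)"
  using \<sigma> c unfolding mem_ssimp_Sing_iff[OF K] mem_ssimp_Sing_iff[OF L] image_join_simplex
  by (simp add: contiguous_def join_simplex_def)

definition join_op :: "nat \<Rightarrow> nat \<Rightarrow> (nat \<Rightarrow> nat) \<Rightarrow> nat \<Rightarrow> nat" where
  "join_op m n \<theta> = (\<lambda>i. if i \<le> m then \<theta> i else Suc n + \<theta> (i - Suc m))"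

lemma simp_op_join_op:
  assumes \<theta>: "simp_op m n \<theta>"
  shows "simp_op (2*m+1) (2*n+1) (join_op m n \<theta>)"
  unfolding simp_op_def
proof
  show "mono_on {0..2*m+1} (join_op m n \<theta>)"
  proof (rule monotone_onI)
    fix i j assume "i \<in> {0..2*m+1}" "j \<in> {0..2*m+1}" "i \<le> j"
    then show "join_op m n \<theta> i \<le> join_op m n \<theta> j"
      using simp_op_mono[OF \<theta>, of i j] simp_op_le[OF \<theta>, of i]
        simp_op_mono[OF \<theta>, of "i - Suc m" "j - Suc m"]
      by (auto simp: join_op_def)
  qed
  have "join_op m n \<theta> i \<le> 2*n+1" if "i \<le> 2*m+1" for i
    using that simp_op_le[OF \<theta>, of i] simp_op_le[OF \<theta>, of "i - Suc m"]
    by (cases "i \<le> m") (simp_all add: join_op_def)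
  then show "join_op m n \<theta> ` {0..2*m+1} \<subseteq> {0..2*n+1}"
    by auto
qed

lemma sact_join_simplex:
  assumes "simp_op m n \<theta>"
  shows "sact (Sing L) (2*m+1) (2*n+1) (join_op m n \<theta>) (join_simplex h0 h1 n \<sigma>)
    = join_simplex h0 h1 m (sact (Sing K) m n \<theta> \<sigma>)"
  using simp_op_le[OF assms] by (auto simp: fun_eq_iff sact_Sing join_simplex_def join_op_def)

lemma sact_join_simplex_front:
  "sact (Sing L) m (2*m+1) (\<lambda>i. i) (join_simplex h0 h1 m \<sigma>) = Sing_map h0 m \<sigma>"
  by (auto simp: fun_eq_iff sact_Sing join_simplex_def Sing_map_def)

lemma sact_join_simplex_back:
  "sact (Sing L) m (2*m+1) (\<lambda>i. i + Suc m) (join_simplex h0 h1 m \<sigma>) = Sing_map h1 m \<sigma>"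
  by (auto simp: fun_eq_iff sact_Sing join_simplex_def Sing_map_def)

lemma sum_atMost_double_Suc:
  "(\<Sum>i\<le>2*m+1. g i) = (\<Sum>i\<le>m. g i) + (\<Sum>i\<le>m. g (i + Suc m))"
proof -
  have "(\<Sum>i\<le>2*m+1. g i) = (\<Sum>i\<in>{0..m + (m+1)}. g i)"
    by (simp only: atMost_atLeast0 mult_2 add.assoc)
  also have "\<dots> = (\<Sum>i\<in>{0..m}. g i) + (\<Sum>i\<in>{m+1..m + (m+1)}. g i)"
    by (rule sum.ub_add_nat) simp
  also have "(\<Sum>i\<in>{m+1..m + (m+1)}. g i) = (\<Sum>i\<in>{0+(m+1)..m + (m+1)}. g i)"
    by simp
  also have "\<dots> = (\<Sum>i\<in>{0..m}. g (i + (m+1)))"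
    by (rule sum.shift_bounds_cl_nat_ivl)
  finally show ?thesis
    by (simp add: atMost_atLeast0)
qed

lemma simplex_push_eq_sum: "simplex_push m \<theta> t j = (\<Sum>i\<le>m. if \<theta> i = j then t i else 0)"
proof -
  have "simplex_push m \<theta> t j = (\<Sum>i \<in> {i \<in> {..m}. \<theta> i = j}. t i)"
    unfolding simplex_push_def by (rule sum.cong) auto
  also have "\<dots> = (\<Sum>i\<le>m. if \<theta> i = j then t i else 0)"
    by (rule sum.inter_filter) simp
  finally show ?thesis .
qed

definition join_coords :: "nat \<Rightarrow> real \<Rightarrow> (nat \<Rightarrow> real) \<Rightarrow> (nat \<Rightarrow> real)" where
  "join_coords m s t =
    (\<lambda>i. if i \<le> m then (1 - s) * t i else if i \<le> 2*m+1 then s * t (i - Suc m) else 0)"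

lemma join_coords_in_standard_simplex:
  assumes t: "t \<in> standard_simplex m" and s: "s \<in> {0..1}"
  shows "join_coords m s t \<in> standard_simplex (2*m+1)"
proof -
  have t01: "0 \<le> t i" "t i \<le> 1" for i
    using t by (auto simp: standard_simplex_def)
  have "0 \<le> join_coords m s t i \<and> join_coords m s t i \<le> 1" for i
    using s t01[of i] t01[of "i - Suc m"] by (auto simp: join_coords_def intro: mult_le_one)
  moreover have "\<forall>i>2*m+1. join_coords m s t i = 0"
    by (simp add: join_coords_def)
  moreover have "(\<Sum>i\<le>2*m+1. join_coords m s t i) = 1"
  proof -
    have "(\<Sum>i\<le>2*m+1. join_coords m s t i) = (\<Sum>i\<le>m. (1 - s) * t i) + (\<Sum>i\<le>m. s * t i)"
      unfolding sum_atMost_double_Suc by (simp add: join_coords_def)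
    also have "\<dots> = 1"
      using t by (simp add: standard_simplex_def sum_distrib_left[symmetric])
    finally show ?thesis .
  qed
  ultimately show ?thesis
    by (simp add: standard_simplex_def)
qed

lemma simplex_push_join_op:
  assumes \<theta>: "simp_op m n \<theta>"
  shows "simplex_push (2*m+1) (join_op m n \<theta>) (join_coords m s t) = join_coords n s (simplex_push m \<theta> t)"
proof
  fix j
  let ?J = "join_op m n \<theta>" and ?u = "join_coords m s t"
  let ?A = "\<Sum>i\<le>m. if \<theta> i = j then t i else 0"
  let ?B = "\<Sum>i\<le>m. if Suc n + \<theta> i = j then t i else 0"
  have lower: "(\<Sum>i\<le>m. if ?J i = j then ?u i else 0) = (1 - s) * ?A"
    unfolding sum_distrib_left by (rule sum.cong) (auto simp: join_op_def join_coords_def)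
  have upper: "(\<Sum>i\<le>m. if ?J (i + Suc m) = j then ?u (i + Suc m) else 0) = s * ?B"
    unfolding sum_distrib_left by (rule sum.cong) (auto simp: join_op_def join_coords_def)
  have push_eq: "simplex_push (2*m+1) ?J ?u j = (1 - s) * ?A + s * ?B"
    unfolding simplex_push_eq_sum sum_atMost_double_Suc lower upper ..
  have \<theta>_le: "\<theta> i \<le> n" if "i \<in> {..m}" for i
    using simp_op_le[OF \<theta>] that by simp
  consider "j \<le> n" | "n < j" "j \<le> 2*n+1" | "2*n+1 < j" by linarith
  then show "simplex_push (2*m+1) ?J ?u j = join_coords n s (simplex_push m \<theta> t) j"
  proof cases
    case 1
    then have "?B = 0" by (intro sum.neutral) auto
    with 1 show ?thesis
      unfolding push_eq by (simp add: join_coords_def simplex_push_eq_sum)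
  next
    case 2
    then have "?A = 0" using \<theta>_le by (intro sum.neutral) force
    moreover have "?B = simplex_push m \<theta> t (j - Suc n)"
      unfolding simplex_push_eq_sum using 2 by (intro sum.cong) auto
    ultimately show ?thesis
      using 2 unfolding push_eq by (simp add: join_coords_def)
  next
    case 3
    then have "?A = 0" "?B = 0"
      using \<theta>_le by (intro sum.neutral; force)+
    with 3 show ?thesis
      unfolding push_eq by (simp add: join_coords_def)
  qed
qed

lemma simplex_push_front: "simplex_push m (\<lambda>i. i) t = join_coords m 0 t"
proof
  fix j
  have "{i. i \<le> m \<and> i = j} = (if j \<le> m then {j} else {})"
    by auto
  then show "simplex_push m (\<lambda>i. i) t j = join_coords m 0 t j"
    by (simp add: simplex_push_def join_coords_def)
qed

lemma simplex_push_back: "simplex_push m (\<lambda>i. i + Suc m) t = join_coords m 1 t"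
proof
  fix j
  have "{i. i \<le> m \<and> i + Suc m = j} = (if Suc m \<le> j \<and> j \<le> 2*m+1 then {j - Suc m} else {})"
    by auto
  then show "simplex_push m (\<lambda>i. i + Suc m) t j = join_coords m 1 t j"
    by (simp add: simplex_push_def join_coords_def)
qed

lemma continuous_map_join_coords:
  "continuous_map (prod_topology (top_of_set {0..1}) (simplex_top m)) (simplex_top (2*m+1))
    (\<lambda>(s, t). join_coords m s t)"
proof -
  let ?X = "prod_topology (top_of_set {0..1::real}) (simplex_top m)"
  have s: "continuous_map ?X euclideanreal fst"
    by (rule continuous_map_into_fulltopology[OF continuous_map_fst])
  have t: "continuous_map ?X euclideanreal (\<lambda>x. snd x i)" for i
  proof -
    have "continuous_map (simplex_top m) euclideanreal (\<lambda>t. t i)"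
      unfolding simplex_top_def
      by (rule continuous_map_from_subtopology[OF continuous_map_product_projection]) simp
    then show ?thesis
      using continuous_map_compose[OF continuous_map_snd] by (simp add: o_def)
  qed
  have "continuous_map ?X euclideanreal (\<lambda>x. (\<lambda>(s, t). join_coords m s t) x k)" for k
  proof -
    consider "k \<le> m" | "m < k" "k \<le> 2*m+1" | "2*m+1 < k" by linarith
    then show ?thesis
    proof cases
      case 1
      have "continuous_map ?X euclideanreal (\<lambda>x. (1 - fst x) * snd x k)"
        by (intro continuous_map_real_mult continuous_map_diff continuous_map_canonical_const s t)
      then show ?thesis using 1 by (simp add: join_coords_def case_prod_unfold)
    next
      case 2
      have "continuous_map ?X euclideanreal (\<lambda>x. fst x * snd x (k - Suc m))"
        by (intro continuous_map_real_mult s t)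
      then show ?thesis using 2 by (simp add: join_coords_def case_prod_unfold)
    next
      case 3
      then show ?thesis by (simp add: join_coords_def case_prod_unfold)
    qed
  qed
  moreover have "(\<lambda>(s, t). join_coords m s t) ` topspace ?X \<subseteq> standard_simplex (2*m+1)"
    using join_coords_in_standard_simplex by (auto simp: simplex_top_def)
  ultimately show ?thesis
    unfolding simplex_top_def continuous_map_in_subtopology
    by (simp add: continuous_map_componentwise_UNIV Pi_iff image_subset_iff)
qed

definition join_homotopy :: "('v \<Rightarrow> 'w) \<Rightarrow> ('v \<Rightarrow> 'w) \<Rightarrow> 'w cpx \<Rightarrow>
    real \<times> (nat \<times> ((nat \<Rightarrow> 'v) \<times> (nat \<Rightarrow> real))) \<Rightarrow> (nat \<times> ((nat \<Rightarrow> 'w) \<times> (nat \<Rightarrow> real))) set"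
  where "join_homotopy h0 h1 L =
    (\<lambda>(s, (m, (\<sigma>, t))). real_class (Sing L) (2*m+1, (join_simplex h0 h1 m \<sigma>, join_coords m s t)))"

lemma join_homotopy_simp [simp]:
  "join_homotopy h0 h1 L (s, (m, (\<sigma>, t)))
    = real_class (Sing L) (2*m+1, (join_simplex h0 h1 m \<sigma>, join_coords m s t))"
  by (simp add: join_homotopy_def)

context
  fixes K :: "'v cpx" and L :: "'w cpx" and h0 h1 :: "'v \<Rightarrow> 'w"
  assumes K: "is_cpx K" and L: "is_cpx L" and contiguous: "contiguous K L h0 h1"
begin

lemma join_homotopy_respects:
  assumes s: "s \<in> {0..1}"
  shows "(\<lambda>p. join_homotopy h0 h1 L (s, p)) respects real_rel (Sing K)"
proof (rule real_rel_respects)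
  fix p q assume "(p, q) \<in> real_gen (Sing K)"
    and p: "p \<in> topspace (real_pre (Sing K))" and q: "q \<in> topspace (real_pre (Sing K))"
  then obtain m n \<theta> \<sigma> t where p_eq: "p = (m, (sact (Sing K) m n \<theta> \<sigma>, t))"
    and q_eq: "q = (n, (\<sigma>, simplex_push m \<theta> t))" and \<theta>: "simp_op m n \<theta>"
    and \<sigma>: "\<sigma> \<in> ssimp (Sing K) n"
    unfolding real_gen_def by blast
  have t: "t \<in> standard_simplex m" and push: "simplex_push m \<theta> t \<in> standard_simplex n"
    and \<sigma>': "sact (Sing K) m n \<theta> \<sigma> \<in> ssimp (Sing K) m"
    using p q by (auto simp: p_eq q_eq topspace_real_pre)
  have sact_eq: "sact (Sing L) (2*m+1) (2*n+1) (join_op m n \<theta>) (join_simplex h0 h1 n \<sigma>)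
      = join_simplex h0 h1 m (sact (Sing K) m n \<theta> \<sigma>)"
    by (rule sact_join_simplex[OF \<theta>])
  have sact_mem: "sact (Sing L) (2*m+1) (2*n+1) (join_op m n \<theta>) (join_simplex h0 h1 n \<sigma>)
      \<in> ssimp (Sing L) (2*m+1)"
    unfolding sact_eq by (rule join_simplex_in_Sing[OF K L contiguous \<sigma>'])
  have push_mem: "simplex_push (2*m+1) (join_op m n \<theta>) (join_coords m s t) \<in> standard_simplex (2*n+1)"
    unfolding simplex_push_join_op[OF \<theta>] by (rule join_coords_in_standard_simplex[OF push s])
  have "real_class (Sing L)
      (2*m+1, (sact (Sing L) (2*m+1) (2*n+1) (join_op m n \<theta>) (join_simplex h0 h1 n \<sigma>), join_coords m s t))
    = real_class (Sing L)
      (2*n+1, (join_simplex h0 h1 n \<sigma>, simplex_push (2*m+1) (join_op m n \<theta>) (join_coords m s t)))"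
    by (rule real_class_sact[OF simp_op_join_op[OF \<theta>] join_simplex_in_Sing[OF K L contiguous \<sigma>]
          sact_mem join_coords_in_standard_simplex[OF t s] push_mem])
  then show "join_homotopy h0 h1 L (s, p) = join_homotopy h0 h1 L (s, q)"
    unfolding p_eq q_eq join_homotopy_simp sact_eq simplex_push_join_op[OF \<theta>] .
qed

lemma join_homotopy_ends:
  assumes \<sigma>: "\<sigma> \<in> ssimp (Sing K) m" and t: "t \<in> standard_simplex m"
  shows "join_homotopy h0 h1 L (0, (m, (\<sigma>, t)))
      = realization_map (Sing L) (Sing_map h0) (real_class (Sing K) (m, (\<sigma>, t)))"
    and "join_homotopy h0 h1 L (1, (m, (\<sigma>, t)))
      = realization_map (Sing L) (Sing_map h1) (real_class (Sing K) (m, (\<sigma>, t)))"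
proof -
  have front_face: "simp_op m (2*m+1) (\<lambda>i. i)" and back_face: "simp_op m (2*m+1) (\<lambda>i. i + Suc m)"
    unfolding simp_op_def by (auto intro: monotone_onI)
  have h0: "simplicial_map (Sing K) (Sing L) (Sing_map h0)"
    and h1: "simplicial_map (Sing K) (Sing L) (Sing_map h1)"
    using contiguous_imp_cpx_map[OF K L] contiguous contiguous_sym
    by (blast intro: simplicial_map_Sing_map[OF K L])+
  have \<tau>: "join_simplex h0 h1 m \<sigma> \<in> ssimp (Sing L) (2*m+1)"
    by (rule join_simplex_in_Sing[OF K L contiguous \<sigma>])
  have "Sing_map h0 m \<sigma> \<in> ssimp (Sing L) m" "Sing_map h1 m \<sigma> \<in> ssimp (Sing L) m"
    using h0 h1 \<sigma> unfolding simplicial_map_def by blast+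
  then have "real_class (Sing L) (m, (Sing_map h0 m \<sigma>, t))
      = real_class (Sing L) (2*m+1, (join_simplex h0 h1 m \<sigma>, join_coords m 0 t))"
    and "real_class (Sing L) (m, (Sing_map h1 m \<sigma>, t))
      = real_class (Sing L) (2*m+1, (join_simplex h0 h1 m \<sigma>, join_coords m 1 t))"
    using real_class_sact[OF front_face \<tau> _ t] real_class_sact[OF back_face \<tau> _ t]
      join_coords_in_standard_simplex[OF t]
    unfolding sact_join_simplex_front sact_join_simplex_back simplex_push_front simplex_push_back
    by auto
  then show "join_homotopy h0 h1 L (0, (m, (\<sigma>, t)))
      = realization_map (Sing L) (Sing_map h0) (real_class (Sing K) (m, (\<sigma>, t)))"
    and "join_homotopy h0 h1 L (1, (m, (\<sigma>, t)))
      = realization_map (Sing L) (Sing_map h1) (real_class (Sing K) (m, (\<sigma>, t)))"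
    unfolding join_homotopy_simp realization_map_real_class[OF h0] realization_map_real_class[OF h1]
      real_pre_map_simp
    by simp_all
qed

lemma continuous_map_join_homotopy:
  "continuous_map (prod_topology (top_of_set {0..1}) (real_pre (Sing K))) (realization (Sing L))
    (join_homotopy h0 h1 L)"
proof (rule continuous_map_from_prod_real_pre)
  fix n \<sigma> assume \<sigma>: "\<sigma> \<in> ssimp (Sing K) n"
  let ?I = "prod_topology (top_of_set {0..1}) (simplex_top n)"
  have "continuous_map ?I (real_pre (Sing L))
      (\<lambda>(s, t). (2*n+1, (join_simplex h0 h1 n \<sigma>, join_coords n s t)))"
    using continuous_map_compose[OF continuous_map_join_coords
        continuous_map_into_real_pre[OF join_simplex_in_Sing[OF K L contiguous \<sigma>]]]
    by (simp add: o_def case_prod_unfold)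
  then have "continuous_map ?I (realization (Sing L))
      (real_class (Sing L) \<circ> (\<lambda>(s, t). (2*n+1, (join_simplex h0 h1 n \<sigma>, join_coords n s t))))"
    using quotient_imp_continuous_map[OF quotient_map_real_class] by (rule continuous_map_compose)
  then show "continuous_map ?I (realization (Sing L)) (\<lambda>(s, t). join_homotopy h0 h1 L (s, (n, (\<sigma>, t))))"
    by (simp add: o_def case_prod_unfold)
qed

lemma contiguous_imp_homotopic_realization:
  "homotopic_with (\<lambda>h. True) (realization (Sing K)) (realization (Sing L))
    (realization_map (Sing L) (Sing_map h0)) (realization_map (Sing L) (Sing_map h1))"
proof -
  let ?I = "top_of_set {0..1::real}"
  have "quotient_map (prod_topology ?I (real_pre (Sing K))) (prod_topology ?I (realization (Sing K)))
      (\<lambda>(s, p). (s, real_class (Sing K) p))"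
    by (intro quotient_map_prod_right quotient_map_real_class locally_compact_space_closed_subset
        locally_compact_space_euclidean) (simp_all add: Hausdorff_space_subtopology)
  then obtain H where H: "continuous_map (prod_topology ?I (realization (Sing K))) (realization (Sing L)) H"
    and H_class: "\<And>s p. (s, p) \<in> topspace (prod_topology ?I (real_pre (Sing K))) \<Longrightarrow>
        H (s, real_class (Sing K) p) = join_homotopy h0 h1 L (s, p)"
  proof (rule quotient_map_lift_exists[OF _ continuous_map_join_homotopy])
    fix x y assume "x \<in> topspace (prod_topology ?I (real_pre (Sing K)))"
      and "(\<lambda>(s, p). (s, real_class (Sing K) p)) x = (\<lambda>(s, p). (s, real_class (Sing K) p)) y"
    moreover obtain s p s' q where xy: "x = (s, p)" "y = (s', q)"
      by (cases x, cases y)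
    ultimately have "s \<in> {0..1}" "s' = s" "(p, q) \<in> real_rel (Sing K)"
      by (auto simp: real_class_eq_iff)
    then show "join_homotopy h0 h1 L x = join_homotopy h0 h1 L y"
      using congruentD[OF join_homotopy_respects] xy by simp
  qed auto
  have "H (0, C) = realization_map (Sing L) (Sing_map h0) C \<and> H (1, C) = realization_map (Sing L) (Sing_map h1) C"
    if C_in: "C \<in> topspace (realization (Sing K))" for C
  proof -
    obtain m \<sigma> t where \<sigma>: "\<sigma> \<in> ssimp (Sing K) m" and t: "t \<in> standard_simplex m"
      and C: "C = real_class (Sing K) (m, (\<sigma>, t))"
      using realization_pointE[OF C_in] by blast
    then show ?thesis
      using H_class join_homotopy_ends[OF \<sigma> t] by (simp add: topspace_real_pre)
  qed
  then show ?thesis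
    using H by (subst homotopic_with) auto
qed

end

section \<open>\<open>\<times>\<close>-homotopies\<close>

lemma contiguous_slices:
  assumes K: "is_cpx K" and H: "cpx_map (cpx_prod K (interval_cpx n)) L H" and i: "i < n"
  shows "contiguous K L (\<lambda>v. H (v, i)) (\<lambda>v. H (v, Suc i))"
  unfolding contiguous_def
proof
  fix s assume s: "s \<in> simps K"
  have "s \<noteq> {}" "finite s" "s \<subseteq> verts K"
    using K s unfolding is_cpx_def by blast+
  moreover have "{i, Suc i} \<in> simps (interval_cpx n)"
    using i by (auto simp: interval_cpx_def simps_def)
  ultimately have "s \<times> {i, Suc i} \<in> simps (cpx_prod K (interval_cpx n))"
    using i s by (auto simp: cpx_prod_def simps_def verts_def interval_cpx_def)
  then have "H ` (s \<times> {i, Suc i}) \<in> simps L"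
    using H by (simp add: cpx_map_def)
  moreover have "H ` (s \<times> {i, Suc i}) = (\<lambda>v. H (v, i)) ` s \<union> (\<lambda>v. H (v, Suc i)) ` s"
    by auto
  ultimately show "(\<lambda>v. H (v, i)) ` s \<union> (\<lambda>v. H (v, Suc i)) ` s \<in> simps L"
    by simp
qed

lemma times_homotopic_imp_homotopic_realization:
  assumes K: "is_cpx K" and L: "is_cpx L" and "times_homotopic K L f g"
  shows "homotopic_with (\<lambda>h. True) (realization (Sing K)) (realization (Sing L))
    (realization_map (Sing L) (Sing_map f)) (realization_map (Sing L) (Sing_map g))"
proof -
  obtain n H where n: "n \<ge> 1" and H: "cpx_map (cpx_prod K (interval_cpx n)) L H"
    and ends: "\<And>v. v \<in> verts K \<Longrightarrow> H (v, 0) = f v \<and> H (v, n) = g v"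
    using assms(3) unfolding times_homotopic_def by blast
  let ?R = "\<lambda>i. realization_map (Sing L) (Sing_map (\<lambda>v. H (v, i)))"
  have steps: "homotopic_with (\<lambda>h. True) (realization (Sing K)) (realization (Sing L)) (?R 0) (?R i)"
    if "i \<le> n" for i
    using that
  proof (induction i)
    case 0
    have "contiguous K L (\<lambda>v. H (v, 0)) (\<lambda>v. H (v, 1))"
      using contiguous_slices[OF K H] n by simp
    then show ?case
      by (simp add: continuous_map_realization_map simplicial_map_Sing_map[OF K L]
          contiguous_imp_cpx_map[OF K L])
  next
    case (Suc i)
    then show ?case
      using contiguous_imp_homotopic_realization[OF K L contiguous_slices[OF K H]]
      by (meson Suc_le_lessD homotopic_with_trans less_imp_le)
  qed
  have "homotopic_with (\<lambda>h. True) (realization (Sing K)) (realization (Sing L)) (?R 0) (?R n)"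
    using steps by simp
  then show ?thesis
  proof (rule homotopic_with_eq)
    fix C assume C: "C \<in> topspace (realization (Sing K))"
    show "realization_map (Sing L) (Sing_map f) C = ?R 0 C"
      by (rule realization_map_Sing_map_cong[OF _ C]) (simp add: ends)
    show "realization_map (Sing L) (Sing_map g) C = ?R n C"
      by (rule realization_map_Sing_map_cong[OF _ C]) (simp add: ends)
  qed simp
qed

lemma homotopic_realization_Sing_map_inverse:
  assumes K: "is_cpx K" and L: "is_cpx L" and f: "cpx_map K L f" and g: "cpx_map L K g"
    and "times_homotopic K K (g \<circ> f) id"
  shows "homotopic_with (\<lambda>h. True) (realization (Sing K)) (realization (Sing K))
    (realization_map (Sing K) (Sing_map g) \<circ> realization_map (Sing L) (Sing_map f)) id"
  using times_homotopic_imp_homotopic_realization[OF K K assms(5)]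
  by (rule homotopic_with_eq)
    (simp_all add: realization_map_Sing_map_comp[OF K L K f g] realization_map_Sing_map_id)

theorem proposition2p36:
  fixes K :: "'v cpx" and L :: "'w cpx" and f :: "'v \<Rightarrow> 'w"
  assumes "is_cpx K" and "is_cpx L"
    and "times_htpy_equiv K L f"
  shows "sset_weak_equiv (Sing K) (Sing L) (Sing_map f)"
proof -
  obtain g where f: "cpx_map K L f" and g: "cpx_map L K g"
    and gf: "times_homotopic K K (g \<circ> f) id" and fg: "times_homotopic L L (f \<circ> g) id"
    using assms(3) unfolding times_htpy_equiv_def by blast
  have "continuous_map (realization (Sing K)) (realization (Sing L)) (realization_map (Sing L) (Sing_map f))"
    by (rule continuous_map_realization_map[OF simplicial_map_Sing_map[OF assms(1,2) f]])
  moreover have "continuous_map (realization (Sing L)) (realization (Sing K)) (realization_map (Sing K) (Sing_map g))"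
    by (rule continuous_map_realization_map[OF simplicial_map_Sing_map[OF assms(2,1) g]])
  ultimately show ?thesis
    unfolding sset_weak_equiv_def Let_def
    using homotopic_realization_Sing_map_inverse[OF assms(1,2) f g gf]
      homotopic_realization_Sing_map_inverse[OF assms(2,1) g f fg]
    by blast
qed

end
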